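(* Let $X$ be a quasi-Banach space and $f=(a_n)_{n=1}^\infty\in\mathbb{F}^{\mathbb{N}}$. Then $f\in\mathscr{G}_b(X)$ if and only if the series $\sum_{n=1}^\infty a_nx_n$ converges in $X$ for every bounded sequence $(x_n)_{n=1}^\infty$ in $X$.
   Context: For $g=(b_n)\in[0,\infty]^{\mathbb{N}}$ define $\lambda_X(g)=\sup\{\|\sum_{n=1}^Nb_nx_n\|:N\in\mathbb{N},\ \|x_n\|\le1\}$ if all $b_n<\infty$, and $\lambda_X(g)=\infty$ otherwise. The galb of $X$ is $\mathscr{G}(X)=\{(a_n)\in\mathbb{F}^{\mathbb{N}}:\lambda_X((|a_n|)_n)<\infty\}$, quasi-normed by $(a_n)\mapsto\lambda_X((|a_n|)_n)$, and $\mathscr{G}_b(X)$ is the closure in $\mathscr{G}(X)$ of the finitely supported sequences. *)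

theory Defs
  imports "HOL-Analysis.Analysis"
begin

text \<open>A quasi-normed space over the scalar field 'k (R or C, rendered as a
real normed field) given by an abstract scalar multiplication sc on an
additive group 'a and a quasi-norm q.\<close>

definition quasi_norm :: "('k::real_normed_field \<Rightarrow> 'a::ab_group_add \<Rightarrow> 'a) \<Rightarrow> ('a \<Rightarrow> real) \<Rightarrow> bool" where
  "quasi_norm sc q \<longleftrightarrow> vector_space sc \<and>
     (\<forall>x. 0 \<le> q x) \<and> (\<forall>x. q x = 0 \<longleftrightarrow> x = 0) \<and>
     (\<forall>t x. q (sc t x) = norm t * q x) \<and>
     (\<exists>\<kappa>\<ge>1. \<forall>x y. q (x + y) \<le> \<kappa> * (q x + q y))"

definition quasi_complete :: "('a::ab_group_add \<Rightarrow> real) \<Rightarrow> bool" where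
  "quasi_complete q \<longleftrightarrow>
     (\<forall>x :: nat \<Rightarrow> 'a. (\<forall>\<epsilon>>0. \<exists>N. \<forall>m\<ge>N. \<forall>n\<ge>N. q (x m - x n) < \<epsilon>)
        \<longrightarrow> (\<exists>l. (\<lambda>n. q (x n - l)) \<longlonglongrightarrow> 0))"

definition quasi_banach :: "('k::real_normed_field \<Rightarrow> 'a::ab_group_add \<Rightarrow> 'a) \<Rightarrow> ('a \<Rightarrow> real) \<Rightarrow> bool" where
  "quasi_banach sc q \<longleftrightarrow> quasi_norm sc q \<and> quasi_complete q"

text \<open>lambda_X((|a_n|)_n); sequences are indexed from 0.\<close>
definition lambdaX :: "('k::real_normed_field \<Rightarrow> 'a::ab_group_add \<Rightarrow> 'a) \<Rightarrow> ('a \<Rightarrow> real) \<Rightarrow> (nat \<Rightarrow> 'k) \<Rightarrow> ereal" where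
  "lambdaX sc q a = (SUP p \<in> {(N, x). \<forall>n. q (x n) \<le> 1}.
      ereal (q (\<Sum>n<fst p. sc (of_real (norm (a n))) (snd p n))))"

definition galb :: "('k::real_normed_field \<Rightarrow> 'a::ab_group_add \<Rightarrow> 'a) \<Rightarrow> ('a \<Rightarrow> real) \<Rightarrow> (nat \<Rightarrow> 'k) set" where
  "galb sc q = {a. lambdaX sc q a < \<infinity>}"

definition galb_b :: "('k::real_normed_field \<Rightarrow> 'a::ab_group_add \<Rightarrow> 'a) \<Rightarrow> ('a \<Rightarrow> real) \<Rightarrow> (nat \<Rightarrow> 'k) set" where
  "galb_b sc q = {a \<in> galb sc q. \<forall>\<epsilon>>0. \<exists>b. finite {n. b n \<noteq> 0} \<and> lambdaX sc q (a - b) < ereal \<epsilon>}"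

definition series_converges :: "('k::real_normed_field \<Rightarrow> 'a::ab_group_add \<Rightarrow> 'a) \<Rightarrow> ('a \<Rightarrow> real) \<Rightarrow> (nat \<Rightarrow> 'k) \<Rightarrow> (nat \<Rightarrow> 'a) \<Rightarrow> bool" where
  "series_converges sc q a x \<longleftrightarrow> (\<exists>s. (\<lambda>N. q ((\<Sum>n<N. sc (a n) (x n)) - s)) \<longlonglongrightarrow> 0)"

end

(*
  If a is approximated in lambda_X by a finitely supported b, then beyond the support of b
  every block sum of a_k x_k, for a bounded sequence x, coincides with the block sum for a - b,
  whose quasi-norm is at most sup q(x_k) * lambda_X(a - b); so the partial sums are Cauchy and
  converge by completeness.

  Conversely it suffices that the tails of a have small lambda_X: the tail beyond M and the
  finitely supported head together bound lambda_X(a), and the head approximates a. If all tails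
  had lambda_X > eps, a gliding hump argument would give consecutive blocks [m_k, m_(k+1)) and
  vectors of quasi-norm at most 1 with q(sum over the block of |a_n| x_n) > eps; glued into one
  sequence, with the phases of the a_n rotated out, they form a bounded sequence whose series
  is not Cauchy.
*)

theory Submission
  imports Defs
begin

definition seq_tail :: "nat \<Rightarrow> (nat \<Rightarrow> 'k::zero) \<Rightarrow> nat \<Rightarrow> 'k" where
  "seq_tail M a = (\<lambda>n. if n < M then 0 else a n)"

definition series_cauchy ::
    "('k::real_normed_field \<Rightarrow> 'a::ab_group_add \<Rightarrow> 'a) \<Rightarrow> ('a \<Rightarrow> real) \<Rightarrow>
      (nat \<Rightarrow> 'k) \<Rightarrow> (nat \<Rightarrow> 'a) \<Rightarrow> bool" where
  "series_cauchy sc q a x \<longleftrightarrow>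
     (\<forall>\<epsilon>>0. \<exists>M. \<forall>n\<ge>M. \<forall>m\<ge>n. q (\<Sum>k\<in>{n..<m}. sc (a k) (x k)) < \<epsilon>)"

lemma sum_lessThan_diff:
  fixes f :: "nat \<Rightarrow> 'a::ab_group_add"
  assumes "n \<le> m"
  shows "(\<Sum>k<m. f k) - (\<Sum>k<n. f k) = (\<Sum>k\<in>{n..<m}. f k)"
  using sum_diff_nat_ivl[of 0 n m f] assms by (simp add: atLeast0LessThan)

lemma sum_lessThan_if_ge:
  fixes f :: "nat \<Rightarrow> 'a::comm_monoid_add"
  shows "(\<Sum>k<m. if n \<le> k then f k else 0) = (\<Sum>k\<in>{n..<m}. f k)"
proof -
  have "(\<Sum>k<m. if n \<le> k then f k else 0) = (\<Sum>k\<in>{k\<in>{..<m}. n \<le> k}. f k)"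
    by (rule sum.inter_filter[symmetric]) simp
  also have "{k\<in>{..<m}. n \<le> k} = {n..<m}" by auto
  finally show ?thesis .
qed

lemma strict_mono_block_unique:
  fixes m :: "nat \<Rightarrow> nat"
  assumes mono: "strict_mono m" and "m 0 = 0"
  shows "\<exists>!k. m k \<le> n \<and> n < m (Suc k)"
proof (rule ex_ex1I)
  define k where "k = (LEAST k. n < m (Suc k))"
  have "n < m (Suc n)" using seq_suble[OF mono, of "Suc n"] by simp
  then have "n < m (Suc k)" unfolding k_def by (rule LeastI)
  moreover have "m k \<le> n"
  proof (cases k)
    case (Suc j)
    then have "j < k" by simp
    then have "\<not> n < m (Suc j)" unfolding k_def by (rule not_less_Least)
    then show ?thesis using Suc by simp
  qed (use \<open>m 0 = 0\<close> in simp)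
  ultimately show "\<exists>k. m k \<le> n \<and> n < m (Suc k)" by blast
next
  have "\<not> (n < m (Suc j) \<and> m k \<le> n)" if "j < k" for j k
  proof -
    have "m (Suc j) \<le> m k" using that mono by (simp add: strict_mono_less_eq)
    then show ?thesis by simp
  qed
  then show "j = k" if "m j \<le> n \<and> n < m (Suc j)" "m k \<le> n \<and> n < m (Suc k)" for j k
    using that by (metis linorder_neqE_nat)
qed

lemma strict_mono_glue_blocks:
  fixes m :: "nat \<Rightarrow> nat" and f :: "nat \<Rightarrow> nat \<Rightarrow> 'b"
  assumes "strict_mono m" "m 0 = 0"
  obtains z where "\<And>k n. m k \<le> n \<Longrightarrow> n < m (Suc k) \<Longrightarrow> z n = f k n"
proof
  fix k n assume "m k \<le> n" "n < m (Suc k)"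
  then show "f (THE k. m k \<le> n \<and> n < m (Suc k)) n = f k n"
    using the1_equality[OF strict_mono_block_unique[OF assms]] by simp
qed

lemma lambdaX_le_iff:
  "lambdaX sc q c \<le> ereal L \<longleftrightarrow>
     (\<forall>N x. (\<forall>n. q (x n) \<le> 1) \<longrightarrow> q (\<Sum>n<N. sc (of_real (norm (c n))) (x n)) \<le> L)"
  unfolding lambdaX_def by (auto simp: SUP_le_iff)

locale quasi_normed_space =
  fixes sc :: "'k::real_normed_field \<Rightarrow> 'a::ab_group_add \<Rightarrow> 'a" and q :: "'a \<Rightarrow> real"
    and K :: real
  assumes vector_space: "vector_space sc"
    and q_nonneg: "\<And>x. 0 \<le> q x"
    and q_eq_0_iff: "\<And>x. q x = 0 \<longleftrightarrow> x = 0"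
    and q_scale: "\<And>t x. q (sc t x) = norm t * q x"
    and K_ge_1: "K \<ge> 1"
    and q_triangle: "\<And>x y. q (x + y) \<le> K * (q x + q y)"
begin

sublocale V: vector_space sc by (rule vector_space)

lemma q_zero [simp]: "q 0 = 0"
  using q_eq_0_iff by simp

lemma q_minus_commute: "q (x - y) = q (y - x)"
  using q_scale[of "-1" "x - y"] by simp

lemma q_diff_triangle: "q (x - z) \<le> K * (q (x - y) + q (z - y))"
  using q_triangle[of "x - y" "y - z"] q_minus_commute[of y z] by simp

lemma q_sum_le:
  assumes "\<And>n. n < N \<Longrightarrow> q (y n) \<le> D" "0 \<le> D"
  shows "q (\<Sum>n<N. y n) \<le> (2*K)^N * D"
  using assms(1)
proof (induction N)
  case 0
  then show ?case using assms(2) by simp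
next
  case (Suc N)
  have "1 \<le> (2*K)^N" using K_ge_1 by (intro one_le_power) simp
  then have "D \<le> (2*K)^N * D" using mult_right_mono[OF _ assms(2)] by fastforce
  then have "q (y N) \<le> (2*K)^N * D" using Suc.prems by (meson lessI order_trans)
  have "q (\<Sum>n<Suc N. y n) \<le> K * (q (\<Sum>n<N. y n) + q (y N))"
    using q_triangle by simp
  also have "\<dots> \<le> K * ((2*K)^N * D + (2*K)^N * D)"
    using Suc \<open>q (y N) \<le> (2*K)^N * D\<close> K_ge_1 by (intro mult_left_mono add_mono) auto
  also have "\<dots> = (2*K)^Suc N * D" by simp
  finally show ?case .
qed

lemma q_sum_le_lambdaX:
  assumes lambda: "lambdaX sc q c \<le> ereal L" and x: "\<And>n. q (x n) \<le> C" and "C > 0"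
  shows "q (\<Sum>n<N. sc (c n) (x n)) \<le> C * L"
proof -
  \<comment> \<open>Divide out the phases of the coefficients and the bound \<open>C\<close>
    (where \<open>c n = 0\<close>, \<open>0 / 0 = 0\<close>).\<close>
  define y where "y n = sc (c n / of_real (C * norm (c n))) (x n)" for n
  have "q (y n) \<le> 1" for n
  proof -
    have "q (y n) = (if c n = 0 then 0 else q (x n) / C)"
      using \<open>C > 0\<close> by (simp add: y_def q_scale norm_divide norm_mult)
    then show ?thesis using x[of n] \<open>C > 0\<close> by simp
  qed
  then have "q (\<Sum>n<N. sc (of_real (norm (c n))) (y n)) \<le> L"
    using lambda by (simp add: lambdaX_le_iff)
  moreover have "(\<Sum>n<N. sc (c n) (x n)) = sc (of_real C) (\<Sum>n<N. sc (of_real (norm (c n))) (y n))"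
    unfolding V.scale_sum_right y_def
    using \<open>C > 0\<close> by (intro sum.cong) (simp_all add: field_simps)
  ultimately show ?thesis
    using \<open>C > 0\<close> by (simp add: q_scale)
qed

lemma q_block_sum_le_lambdaX:
  assumes "lambdaX sc q c \<le> ereal L" "\<And>n. q (x n) \<le> C" "C > 0"
  shows "q (\<Sum>k\<in>{n..<m}. sc (c k) (x k)) \<le> C * L"
proof -
  have "(\<Sum>k\<in>{n..<m}. sc (c k) (x k)) = (\<Sum>k<m. sc (c k) (if n \<le> k then x k else 0))"
    by (simp add: sum_lessThan_if_ge[symmetric] if_distrib cong: if_cong)
  also have "q \<dots> \<le> C * L"
    using assms q_nonneg by (intro q_sum_le_lambdaX) auto
  finally show ?thesis .
qed

lemma lambdaX_finite_support:
  assumes "\<And>n. n \<ge> M \<Longrightarrow> c n = 0"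
  shows "lambdaX sc q c \<le> ereal ((2*K)^M * (\<Sum>n<M. norm (c n)))"
  unfolding lambdaX_le_iff
proof (intro allI impI)
  fix N and x :: "nat \<Rightarrow> 'a" assume x: "\<forall>n. q (x n) \<le> 1"
  define A where "A = (\<Sum>n<M. norm (c n))"
  have "(\<Sum>n<N. sc (of_real (norm (c n))) (x n))
      = (\<Sum>n<min N M. sc (of_real (norm (c n))) (x n))"
    using assms by (intro sum.mono_neutral_right) auto
  also have "q \<dots> \<le> (2*K)^min N M * A"
  proof (rule q_sum_le)
    fix n assume "n < min N M"
    then have "norm (c n) \<le> A"
      unfolding A_def by (intro member_le_sum) auto
    have "q (sc (of_real (norm (c n))) (x n)) = norm (c n) * q (x n)"
      by (simp add: q_scale)
    also have "\<dots> \<le> A * 1"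
      using x \<open>norm (c n) \<le> A\<close>
      by (intro mult_mono) (auto simp: q_nonneg intro: order_trans[OF norm_ge_zero])
    finally show "q (sc (of_real (norm (c n))) (x n)) \<le> A" by simp
  qed (simp add: A_def sum_nonneg)
  also have "\<dots> \<le> (2*K)^M * A"
    using K_ge_1 by (intro mult_right_mono power_increasing) (auto simp: A_def sum_nonneg)
  finally show "q (\<Sum>n<N. sc (of_real (norm (c n))) (x n)) \<le> (2*K)^M * A" .
qed

lemma lambdaX_le_split:
  assumes "\<And>n. norm (a n) = norm (b n) + norm (c n)"
    and "lambdaX sc q b \<le> ereal B" "lambdaX sc q c \<le> ereal C"
  shows "lambdaX sc q a \<le> ereal (K * (B + C))"
  unfolding lambdaX_le_iff
proof (intro allI impI)
  fix N and x :: "nat \<Rightarrow> 'a" assume x: "\<forall>n. q (x n) \<le> 1"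
  have "(\<Sum>n<N. sc (of_real (norm (a n))) (x n))
      = (\<Sum>n<N. sc (of_real (norm (b n))) (x n)) + (\<Sum>n<N. sc (of_real (norm (c n))) (x n))"
    by (simp add: assms(1) V.scale_left_distrib sum.distrib)
  also have "q \<dots> \<le> K * (B + C)"
  proof -
    have "q (\<Sum>n<N. sc (of_real (norm (b n))) (x n)) \<le> B"
      "q (\<Sum>n<N. sc (of_real (norm (c n))) (x n)) \<le> C"
      using x assms(2,3) unfolding lambdaX_le_iff by blast+
    then show ?thesis
      using q_triangle K_ge_1 by (meson add_mono mult_left_mono order_trans zero_le_one)
  qed
  finally show "q (\<Sum>n<N. sc (of_real (norm (a n))) (x n)) \<le> K * (B + C)" .
qed

lemma series_cauchy_if_converges:
  assumes "series_converges sc q a x"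
  shows "series_cauchy sc q a x"
  unfolding series_cauchy_def
proof (intro allI impI)
  fix \<epsilon> :: real assume "\<epsilon> > 0"
  define S where "S N = (\<Sum>n<N. sc (a n) (x n))" for N
  obtain s where "(\<lambda>N. q (S N - s)) \<longlonglongrightarrow> 0"
    using assms unfolding series_converges_def S_def by blast
  moreover have "\<epsilon> / (2*K) > 0" using \<open>\<epsilon> > 0\<close> K_ge_1 by simp
  ultimately obtain M where M: "\<And>N. N \<ge> M \<Longrightarrow> q (S N - s) < \<epsilon> / (2*K)"
    using LIMSEQ_D q_nonneg by fastforce
  have "q (\<Sum>k\<in>{n..<m}. sc (a k) (x k)) < \<epsilon>" if "M \<le> n" "n \<le> m" for n m
  proof -
    have "q (\<Sum>k\<in>{n..<m}. sc (a k) (x k)) = q (S m - S n)"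
      unfolding S_def sum_lessThan_diff[OF \<open>n \<le> m\<close>] ..
    also have "\<dots> \<le> K * (q (S m - s) + q (S n - s))"
      by (rule q_diff_triangle)
    also have "\<dots> < K * (\<epsilon> / (2*K) + \<epsilon> / (2*K))"
      using M that K_ge_1 by (intro mult_strict_left_mono add_strict_mono) auto
    also have "\<dots> = \<epsilon>" using K_ge_1 by (simp add: field_simps)
    finally show ?thesis .
  qed
  then show "\<exists>M. \<forall>n\<ge>M. \<forall>m\<ge>n. q (\<Sum>k\<in>{n..<m}. sc (a k) (x k)) < \<epsilon>" by blast
qed

lemma series_converges_if_cauchy:
  assumes "quasi_complete q" "series_cauchy sc q a x"
  shows "series_converges sc q a x"
proof -
  define S where "S N = (\<Sum>n<N. sc (a n) (x n))" for N
  have "\<exists>M. \<forall>m\<ge>M. \<forall>n\<ge>M. q (S m - S n) < \<epsilon>" if "\<epsilon> > 0" for \<epsilon>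
  proof -
    obtain M where M: "\<And>n m. M \<le> n \<Longrightarrow> n \<le> m \<Longrightarrow> q (\<Sum>k\<in>{n..<m}. sc (a k) (x k)) < \<epsilon>"
      using assms(2) \<open>\<epsilon> > 0\<close> unfolding series_cauchy_def by blast
    have "q (S m - S n) < \<epsilon>" if "M \<le> m" "M \<le> n" for m n
    proof (cases "n \<le> m")
      case True
      then show ?thesis using M[of n m] that by (simp add: S_def sum_lessThan_diff)
    next
      case False
      then have "q (S n - S m) < \<epsilon>" using M[of m n] that by (simp add: S_def sum_lessThan_diff)
      then show ?thesis by (simp add: q_minus_commute)
    qed
    then show ?thesis by blast
  qed
  then obtain s where "(\<lambda>N. q (S N - s)) \<longlonglongrightarrow> 0"
    using assms(1) unfolding quasi_complete_def by blast
  then show ?thesis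
    unfolding series_converges_def S_def by blast
qed

lemma series_converges_if_galb_b:
  assumes complete: "quasi_complete q" and a: "a \<in> galb_b sc q" and x: "\<And>n. q (x n) \<le> C"
  shows "series_converges sc q a x"
proof (rule series_converges_if_cauchy[OF complete])
  define C' where "C' = max C 1"
  have C': "C' > 0" "\<And>n. q (x n) \<le> C'"
    using x by (auto simp: C'_def intro: order_trans[OF _ max.cobounded1])
  show "series_cauchy sc q a x"
    unfolding series_cauchy_def
  proof (intro allI impI)
    fix \<epsilon> :: real assume "\<epsilon> > 0"
    then have "\<epsilon> / (2*C') > 0" using C' by simp
    then obtain b where fin: "finite {n. b n \<noteq> 0}" and b: "lambdaX sc q (a - b) < ereal (\<epsilon> / (2*C'))"
      using a unfolding galb_b_def by blast
    obtain M where "{n. b n \<noteq> 0} \<subseteq> {..<M}"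
      using finite_nat_bounded[OF fin] by blast
    then have M: "\<And>n. n \<ge> M \<Longrightarrow> b n = 0" by auto
    have "q (\<Sum>k\<in>{n..<m}. sc (a k) (x k)) < \<epsilon>" if "M \<le> n" for n m
    proof -
      have "(\<Sum>k\<in>{n..<m}. sc (a k) (x k)) = (\<Sum>k\<in>{n..<m}. sc ((a - b) k) (x k))"
        using M that by (intro sum.cong) auto
      also have "q \<dots> \<le> C' * (\<epsilon> / (2*C'))"
        by (rule q_block_sum_le_lambdaX[OF less_imp_le[OF b] C'(2) C'(1)])
      also have "\<dots> < \<epsilon>" using C' \<open>\<epsilon> > 0\<close> by simp
      finally show ?thesis .
    qed
    then show "\<exists>M. \<forall>n\<ge>M. \<forall>m\<ge>n. q (\<Sum>k\<in>{n..<m}. sc (a k) (x k)) < \<epsilon>" by blast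
  qed
qed

lemma block_sum_gt_if_lambdaX_tail_gt:
  assumes "ereal \<epsilon> < lambdaX sc q (seq_tail M a)"
  shows "\<exists>N x. (\<forall>n. q (x n) \<le> 1) \<and> \<epsilon> < q (\<Sum>n\<in>{M..<N}. sc (of_real (norm (a n))) (x n))"
proof -
  obtain N x where "\<forall>n. q (x n) \<le> 1"
    and "\<epsilon> < q (\<Sum>n<N. sc (of_real (norm (seq_tail M a n))) (x n))"
    using assms unfolding not_le[symmetric] lambdaX_le_iff by auto
  moreover have "(\<Sum>n<N. sc (of_real (norm (seq_tail M a n))) (x n))
      = (\<Sum>n\<in>{M..<N}. sc (of_real (norm (a n))) (x n))"
    unfolding sum_lessThan_if_ge[symmetric] seq_tail_def by (intro sum.cong) auto
  ultimately show ?thesis by auto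
qed

lemma gliding_humps:
  fixes a :: "nat \<Rightarrow> 'k"
  assumes humps: "\<And>M. \<exists>N x. (\<forall>n. q (x n) \<le> 1) \<and>
      \<epsilon> < q (\<Sum>n\<in>{M..<N}. sc (of_real (norm (a n))) (x n))" and "\<epsilon> > 0"
  obtains m z where "strict_mono m" "\<And>n. q (z n) \<le> 1"
    "\<And>k. \<epsilon> < q (\<Sum>n\<in>{m k..<m (Suc k)}. sc (of_real (norm (a n))) (z n))"
proof -
  from humps have "\<forall>M. \<exists>N x. (\<forall>n. q (x n) \<le> 1) \<and>
      \<epsilon> < q (\<Sum>n\<in>{M..<N}. sc (of_real (norm (a n))) (x n))" by blast
  then obtain Nf xf where bounded: "\<And>M n. q (xf M n) \<le> 1"
    and hump: "\<And>M. \<epsilon> < q (\<Sum>n\<in>{M..<Nf M}. sc (of_real (norm (a n))) (xf M n))"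
    by metis
  have "M < Nf M" for M
    using hump[of M] \<open>\<epsilon> > 0\<close> by (cases "M < Nf M") auto
  define m where "m k = (Nf ^^ k) 0" for k
  have m_Suc: "m (Suc k) = Nf (m k)" for k
    by (simp add: m_def)
  have "strict_mono m" "m 0 = 0"
    using \<open>\<And>M. M < Nf M\<close> by (simp_all add: strict_mono_Suc_iff m_Suc) (simp add: m_def)
  obtain z where z: "\<And>k n. m k \<le> n \<Longrightarrow> n < m (Suc k) \<Longrightarrow> z n = xf (m k) n"
    by (rule strict_mono_glue_blocks[OF \<open>strict_mono m\<close> \<open>m 0 = 0\<close>, where f = "\<lambda>k. xf (m k)"]) blast
  show ?thesis
  proof
    show "strict_mono m" by fact
    show "q (z n) \<le> 1" for n
    proof -
      obtain k where "m k \<le> n" "n < m (Suc k)"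
        using strict_mono_block_unique[OF \<open>strict_mono m\<close> \<open>m 0 = 0\<close>, of n] by blast
      then show ?thesis using z bounded by simp
    qed
    show "\<epsilon> < q (\<Sum>n\<in>{m k..<m (Suc k)}. sc (of_real (norm (a n))) (z n))" for k
    proof -
      have "(\<Sum>n\<in>{m k..<m (Suc k)}. sc (of_real (norm (a n))) (z n))
          = (\<Sum>n\<in>{m k..<m (Suc k)}. sc (of_real (norm (a n))) (xf (m k) n))"
        by (intro sum.cong) (auto simp: z)
      then show ?thesis using hump[of "m k"] by (simp add: m_Suc)
    qed
  qed
qed

lemma lambdaX_tails_small_if_series_converge:
  assumes conv: "\<And>x. (\<exists>C. \<forall>n. q (x n) \<le> C) \<Longrightarrow> series_converges sc q a x" and "\<epsilon> > 0"
  shows "\<exists>M. lambdaX sc q (seq_tail M a) \<le> ereal \<epsilon>"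
proof (rule ccontr)
  assume "\<nexists>M. lambdaX sc q (seq_tail M a) \<le> ereal \<epsilon>"
  then have "\<exists>N x. (\<forall>n. q (x n) \<le> 1) \<and>
      \<epsilon> < q (\<Sum>n\<in>{M..<N}. sc (of_real (norm (a n))) (x n))" for M
    using block_sum_gt_if_lambdaX_tail_gt by (simp add: not_le)
  then obtain m z where "strict_mono m" "\<And>n. q (z n) \<le> 1"
    and hump: "\<And>k. \<epsilon> < q (\<Sum>n\<in>{m k..<m (Suc k)}. sc (of_real (norm (a n))) (z n))"
    using \<open>\<epsilon> > 0\<close> by (rule gliding_humps) blast
  \<comment> \<open>Rotating out the phases of the \<open>a\<^sub>n\<close> turns the humps into blocks of \<open>\<Sum> a\<^sub>n w\<^sub>n\<close>.\<close>
  define w where "w n = sc (of_real (norm (a n)) / a n) (z n)" for n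
  have "q (w n) \<le> 1" for n
    using \<open>q (z n) \<le> 1\<close> by (simp add: w_def q_scale norm_divide)
  then have "series_cauchy sc q a w"
    using conv series_cauchy_if_converges by blast
  then obtain k where k: "\<And>n n'. k \<le> n \<Longrightarrow> n \<le> n' \<Longrightarrow> q (\<Sum>j\<in>{n..<n'}. sc (a j) (w j)) < \<epsilon>"
    using \<open>\<epsilon> > 0\<close> unfolding series_cauchy_def by blast
  have "(\<Sum>n\<in>{m k..<m (Suc k)}. sc (a n) (w n))
      = (\<Sum>n\<in>{m k..<m (Suc k)}. sc (of_real (norm (a n))) (z n))"
    by (intro sum.cong) (auto simp: w_def)
  then show False
    using k[of "m k" "m (Suc k)"] hump[of k] seq_suble[OF \<open>strict_mono m\<close>, of k]
      \<open>strict_mono m\<close> by (simp add: strict_mono_less_eq)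
qed

lemma galb_b_if_lambdaX_tails_small:
  assumes tails: "\<And>\<epsilon>. \<epsilon> > 0 \<Longrightarrow> \<exists>M. lambdaX sc q (seq_tail M a) \<le> ereal \<epsilon>"
  shows "a \<in> galb_b sc q"
proof -
  define head where "head M n = (if n < M then a n else 0)" for M n
  have tail_eq: "a - head M = seq_tail M a" for M
    by (auto simp: head_def seq_tail_def)
  obtain M where "lambdaX sc q (seq_tail M a) \<le> ereal 1"
    using tails by fastforce
  moreover have "lambdaX sc q (head M) \<le> ereal ((2*K)^M * (\<Sum>n<M. norm (head M n)))"
    by (rule lambdaX_finite_support) (simp add: head_def)
  moreover have "norm (a n) = norm (seq_tail M a n) + norm (head M n)" for n
    by (simp add: head_def seq_tail_def)
  ultimately have "lambdaX sc q a \<le> ereal (K * (1 + (2*K)^M * (\<Sum>n<M. norm (head M n))))"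
    by (intro lambdaX_le_split)
  then have "a \<in> galb sc q"
    unfolding galb_def by (auto intro: order.strict_trans1)
  moreover have "\<exists>b. finite {n. b n \<noteq> 0} \<and> lambdaX sc q (a - b) < ereal \<epsilon>" if "\<epsilon> > 0" for \<epsilon>
  proof -
    obtain M where "lambdaX sc q (seq_tail M a) \<le> ereal (\<epsilon> / 2)"
      using tails \<open>\<epsilon> > 0\<close> by (meson half_gt_zero)
    moreover have "finite {n. head M n \<noteq> 0}"
      by (rule finite_subset[of _ "{..<M}"]) (auto simp: head_def)
    moreover have "ereal (\<epsilon> / 2) < ereal \<epsilon>" using \<open>\<epsilon> > 0\<close> by simp
    ultimately show ?thesis
      unfolding tail_eq[symmetric] by (blast intro: order.strict_trans1)
  qed
  ultimately show ?thesis
    unfolding galb_b_def by blast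
qed

end

theorem lemma4p9:
  fixes sc :: "'k::real_normed_field \<Rightarrow> 'a::ab_group_add \<Rightarrow> 'a"
    and q :: "'a \<Rightarrow> real" and a :: "nat \<Rightarrow> 'k"
  assumes "quasi_banach sc q"
  shows "a \<in> galb_b sc q \<longleftrightarrow>
    (\<forall>x :: nat \<Rightarrow> 'a. (\<exists>C. \<forall>n. q (x n) \<le> C) \<longrightarrow> series_converges sc q a x)"
proof -
  obtain K where "quasi_normed_space sc q K" and complete: "quasi_complete q"
    using assms unfolding quasi_banach_def quasi_norm_def quasi_normed_space_def by blast
  interpret quasi_normed_space sc q K by fact
  show ?thesis
  proof
    assume "a \<in> galb_b sc q"
    then show "\<forall>x. (\<exists>C. \<forall>n. q (x n) \<le> C) \<longrightarrow> series_converges sc q a x"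
      using series_converges_if_galb_b[OF complete] by blast
  next
    assume "\<forall>x. (\<exists>C. \<forall>n. q (x n) \<le> C) \<longrightarrow> series_converges sc q a x"
    then show "a \<in> galb_b sc q"
      using galb_b_if_lambdaX_tails_small lambdaX_tails_small_if_series_converge by blast
  qed
qed

end
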